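(* Let $n\ge 5$, $k\ge 2$ with $n-k\ge 2$, let $1\le i\le k$, and let $I\subseteq\langle n\rangle$ be nonempty. Then the subgraph $A^{(i,I)}_{n,k}$ of $A_{n,k}$ is Hamiltonian connected, i.e. for any two distinct vertices $u,v$ of $A^{(i,I)}_{n,k}$ there is a path from $u$ to $v$ visiting every vertex of $A^{(i,I)}_{n,k}$ exactly once.
   Context: For integers $n>k\ge 1$, let $\langle n\rangle=\{1,\dots,n\}$. The arrangement graph $A_{n,k}$ has vertex set the set of all sequences $u=u_1u_2\cdots u_k$ with $u_i\in\langle n\rangle$ and $u_i\ne u_j$ for $i\ne j$, and two vertices are adjacent iff they differ in exactly one position. For $l\in\langle k\rangle$ and $I\subseteq\langle n\rangle$, $A^{(l,I)}_{n,k}$ denotes the subgraph of $A_{n,k}$ induced by the set of vertices $p=p_1\cdots p_k$ with $p_l\in I$ (for $I=\{j\}$ this is written $A^{(l,j)}_{n,k}$, and it is isomorphic to $A_{n-1,k-1}$). *)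

theory Defs
  imports Main
begin

text \<open>Vertices of the arrangement graph A(n,k): sequences u_1...u_k of pairwise distinct
 elements of {1..n}, represented as lists of length k (position l is the list index l-1).\<close>
definition arr_vertices :: "nat \<Rightarrow> nat \<Rightarrow> nat list set" where
  "arr_vertices n k = {u. length u = k \<and> distinct u \<and> set u \<subseteq> {1..n}}"

definition arr_adj :: "nat list \<Rightarrow> nat list \<Rightarrow> bool" where
  "arr_adj u v \<longleftrightarrow> length u = length v \<and> card {j. j < length u \<and> u ! j \<noteq> v ! j} = 1"

definition arr_sub_vertices :: "nat \<Rightarrow> nat \<Rightarrow> nat \<Rightarrow> nat set \<Rightarrow> nat list set" where
  "arr_sub_vertices n k l I = {p \<in> arr_vertices n k. p ! (l - 1) \<in> I}"

definition ham_path :: "('a \<Rightarrow> 'a \<Rightarrow> bool) \<Rightarrow> 'a set \<Rightarrow> 'a \<Rightarrow> 'a \<Rightarrow> 'a list \<Rightarrow> bool" where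
  "ham_path adj V u v P \<longleftrightarrow> P \<noteq> [] \<and> hd P = u \<and> last P = v \<and> distinct P \<and> set P = V
     \<and> (\<forall>j. Suc j < length P \<longrightarrow> adj (P ! j) (P ! Suc j))"

definition hamiltonian_connected :: "('a \<Rightarrow> 'a \<Rightarrow> bool) \<Rightarrow> 'a set \<Rightarrow> bool" where
  "hamiltonian_connected adj V \<longleftrightarrow>
     (\<forall>u\<in>V. \<forall>v\<in>V. u \<noteq> v \<longrightarrow> (\<exists>P. ham_path adj V u v P))"

end

theory Submission
  imports Defs "HOL-Combinatorics.Permutations"
begin

text \<open>
  Exchanging positions 1 and i is an automorphism of A(n,k) that maps A^(i,I) onto A^(1,I),
  so only the first position matters. Grouping vertices by their first entry c splits A(T,r)
  into blocks isomorphic to A(T - {c}, r - 1), which are Hamiltonian connected by induction on r,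
  and any two blocks are joined by an edge avoiding one prescribed vertex in each. If u and v
  have different heads, a Hamiltonian path traverses the blocks one after the other, ending in the
  block of v. If both have head c, take a Hamiltonian path of the block of c containing an edge
  c w -- c z such that w and z avoid another admissible head j, and replace this edge by a detour
  c w, j w, ..., j z, c z through the vertices with heads in I - {c}, which form a Hamiltonian
  connected graph by induction on |I|. The existence of such an edge is proved by the same block
  induction. The one case where blocks cannot be linked, A(4,2), is settled by explicit paths.
\<close>

section \<open>Hamiltonian paths\<close>

lemma ham_path_iff:
  "ham_path adj V u v P \<longleftrightarrow>
     P \<noteq> [] \<and> hd P = u \<and> last P = v \<and> distinct P \<and> set P = V \<and> successively adj P"
  by (simp add: ham_path_def successively_conv_nth)

lemma ham_path_singleton: "ham_path adj {u} u u [u]"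
  by (simp add: ham_path_iff)

lemma ham_path_append:
  assumes "ham_path adj A u x P" "ham_path adj B y v Q" "A \<inter> B = {}" "adj x y"
  shows "ham_path adj (A \<union> B) u v (P @ Q)"
  using assms by (auto simp: ham_path_iff successively_append_iff)

lemma ham_path_insert_between:
  assumes "ham_path adj A u v (xs @ p # q # ys)" "ham_path adj B w z Q" "A \<inter> B = {}"
    and "adj p w" "adj z q"
  shows "ham_path adj (A \<union> B) u v (xs @ p # Q @ q # ys)"
proof -
  let ?L = "xs @ [p]" and ?R = "q # ys"
  have P: "?L @ ?R \<noteq> []" "hd (?L @ ?R) = u" "last (?L @ ?R) = v" "distinct (?L @ ?R)"
    "set (?L @ ?R) = A" "successively adj (?L @ ?R)"
    using assms(1) by (simp_all add: ham_path_iff)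
  have Q: "Q \<noteq> []" "hd Q = w" "last Q = z" "distinct Q" "set Q = B" "successively adj Q"
    using assms(2) by (simp_all add: ham_path_iff)
  have "successively adj (?L @ Q @ ?R)"
    using P(6) Q assms(4,5) by (simp add: successively_append_iff successively_Cons hd_append)
  moreover have "distinct (?L @ Q @ ?R)" "set (?L @ Q @ ?R) = A \<union> B"
    using P(4,5) Q(4,5) assms(3) by auto
  moreover have "hd (?L @ Q @ ?R) = u" "last (?L @ Q @ ?R) = v"
    using P(2,3) by (auto simp: hd_append split: if_splits)
  ultimately show ?thesis by (simp add: ham_path_iff)
qed

lemma ham_path_rev:
  assumes "ham_path adj V u v P" "symp adj"
  shows "ham_path adj V v u (rev P)"
  using assms by (auto simp: ham_path_iff hd_rev last_rev symp_def elim: successively_mono)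

lemma ham_path_map:
  assumes "ham_path adj V u v P" "inj_on f V"
    and "\<And>x y. x \<in> V \<Longrightarrow> y \<in> V \<Longrightarrow> adj x y \<Longrightarrow> adj' (f x) (f y)"
  shows "ham_path adj' (f ` V) (f u) (f v) (map f P)"
  using assms by (auto simp: ham_path_iff hd_map last_map distinct_map successively_map
      elim: successively_mono)

lemma hamiltonian_connected_image:
  assumes "hamiltonian_connected adj V" "inj_on f V"
    and "\<And>x y. x \<in> V \<Longrightarrow> y \<in> V \<Longrightarrow> adj x y \<Longrightarrow> adj' (f x) (f y)"
  shows "hamiltonian_connected adj' (f ` V)"
  unfolding hamiltonian_connected_def
proof (intro ballI impI)
  fix a b assume "a \<in> f ` V" "b \<in> f ` V" "a \<noteq> b"
  then obtain x y where "x \<in> V" "y \<in> V" "x \<noteq> y" "a = f x" "b = f y" by blast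
  with assms(1) obtain P where "ham_path adj V x y P"
    unfolding hamiltonian_connected_def by blast
  then have "ham_path adj' (f ` V) (f x) (f y) (map f P)"
    by (rule ham_path_map) (use assms(2,3) in auto)
  with \<open>a = f x\<close> \<open>b = f y\<close> show "\<exists>P. ham_path adj' (f ` V) a b P" by blast
qed

definition admissible_ends :: "'a set \<Rightarrow> 'a \<Rightarrow> 'a \<Rightarrow> bool" where
  "admissible_ends V x y \<longleftrightarrow> x \<in> V \<and> y \<in> V \<and> (x = y \<longrightarrow> V = {x})"

lemma hamiltonian_connected_ham_path:
  assumes "hamiltonian_connected adj V" "admissible_ends V x y"
  obtains P where "ham_path adj V x y P"
  using assms ham_path_singleton
  unfolding hamiltonian_connected_def admissible_ends_def by metis

definition linked :: "('a \<Rightarrow> 'a \<Rightarrow> bool) \<Rightarrow> 'a set \<Rightarrow> 'a set \<Rightarrow> bool" where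
  "linked adj A B \<longleftrightarrow>
     (\<forall>x\<in>A. \<forall>y\<in>B. \<exists>x' y'. adj x' y' \<and> admissible_ends A x x' \<and> admissible_ends B y' y)"

lemma linkedE:
  assumes "linked adj A B" "x \<in> A" "y \<in> B"
  obtains x' y' where "adj x' y'" "admissible_ends A x x'" "admissible_ends B y' y"
  using assms unfolding linked_def by blast

lemma ham_path_through_blocks:
  assumes "distinct (c # cs)" "cs \<noteq> []"
    and "\<forall>d\<in>set cs. B d \<noteq> {} \<and> hamiltonian_connected adj (B d)"
    and "\<forall>d\<in>set (c # cs). \<forall>d'\<in>set (c # cs). d \<noteq> d' \<longrightarrow> B d \<inter> B d' = {} \<and> linked adj (B d) (B d')"
    and "u \<in> B c" "v \<in> B (last cs)"
  shows "\<exists>x x' Q. admissible_ends (B c) u x \<and> adj x x' \<and> ham_path adj (\<Union>d\<in>set cs. B d) x' v Q"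
  using assms
proof (induction cs arbitrary: c u)
  case Nil
  then show ?case by simp
next
  case (Cons d rest)
  have link: "linked adj (B c) (B d)" using Cons.prems(1,4) by auto
  have hc: "hamiltonian_connected adj (B d)" using Cons.prems(3) by simp
  show ?case
  proof (cases "rest = []")
    case True
    then have "v \<in> B d" using Cons.prems(6) by simp
    with link Cons.prems(5) obtain x x' where
      "adj x x'" "admissible_ends (B c) u x" and x': "admissible_ends (B d) x' v"
      by (rule linkedE)
    moreover from hc x' obtain Q where "ham_path adj (B d) x' v Q"
      by (rule hamiltonian_connected_ham_path)
    ultimately show ?thesis using True by auto
  next
    case False
    obtain w where "w \<in> B d" using Cons.prems(3) by auto
    with link Cons.prems(5) obtain x x' where x: "adj x x'" "admissible_ends (B c) u x"
      and "admissible_ends (B d) x' w"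
      by (rule linkedE)
    then have "x' \<in> B d" by (simp add: admissible_ends_def)
    have "\<exists>y y' Q. admissible_ends (B d) x' y \<and> adj y y' \<and> ham_path adj (\<Union>d\<in>set rest. B d) y' v Q"
    proof (rule Cons.IH[OF _ False _ _ \<open>x' \<in> B d\<close>])
      show "distinct (d # rest)" using Cons.prems(1) by simp
      show "\<forall>e\<in>set rest. B e \<noteq> {} \<and> hamiltonian_connected adj (B e)"
        using Cons.prems(3) by simp
      show "\<forall>e\<in>set (d # rest). \<forall>e'\<in>set (d # rest).
          e \<noteq> e' \<longrightarrow> B e \<inter> B e' = {} \<and> linked adj (B e) (B e')"
        using Cons.prems(4) by simp
      show "v \<in> B (last rest)" using Cons.prems(6) False by simp
    qed
    then obtain y y' Q where y: "admissible_ends (B d) x' y" "adj y y'"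
      and Q: "ham_path adj (\<Union>d\<in>set rest. B d) y' v Q" by blast
    from hc y(1) obtain P where P: "ham_path adj (B d) x' y P"
      by (rule hamiltonian_connected_ham_path)
    have "B d \<inter> (\<Union>d\<in>set rest. B d) = {}" using Cons.prems(1,4) by auto
    with ham_path_append[OF P Q _ y(2)]
    have "ham_path adj (\<Union>d\<in>set (d # rest). B d) x' v (P @ Q)" by simp
    with x show ?thesis by blast
  qed
qed

definition has_edge_avoiding :: "'a \<Rightarrow> 'a list list \<Rightarrow> bool" where
  "has_edge_avoiding e P \<longleftrightarrow> (\<exists>xs p q ys. P = xs @ p # q # ys \<and> e \<notin> set p \<and> e \<notin> set q)"

lemma has_edge_avoiding_Cons_Cons:
  "has_edge_avoiding e (x # y # zs) \<longleftrightarrow> e \<notin> set x \<and> e \<notin> set y \<or> has_edge_avoiding e (y # zs)"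
proof
  assume "has_edge_avoiding e (x # y # zs)"
  then obtain xs p q ys where P: "x # y # zs = xs @ p # q # ys" "e \<notin> set p" "e \<notin> set q"
    by (auto simp: has_edge_avoiding_def)
  show "e \<notin> set x \<and> e \<notin> set y \<or> has_edge_avoiding e (y # zs)"
  proof (cases xs)
    case Nil
    with P show ?thesis by simp
  next
    case (Cons a xs')
    with P have "y # zs = xs' @ p # q # ys" by simp
    with P show ?thesis unfolding has_edge_avoiding_def by blast
  qed
next
  assume "e \<notin> set x \<and> e \<notin> set y \<or> has_edge_avoiding e (y # zs)"
  then show "has_edge_avoiding e (x # y # zs)"
    unfolding has_edge_avoiding_def by (metis append_Cons append_Nil)
qed

lemma has_edge_avoiding_iff:
  "has_edge_avoiding e P \<longleftrightarrow> \<not> successively (\<lambda>p q. e \<in> set p \<or> e \<in> set q) P"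
  by (induction P rule: induct_list012)
    (auto simp: has_edge_avoiding_Cons_Cons, auto simp: has_edge_avoiding_def)

lemma has_edge_avoiding_append: "has_edge_avoiding e P \<Longrightarrow> has_edge_avoiding e (P @ Q)"
  unfolding has_edge_avoiding_def by (metis append.assoc append_Cons)

lemma has_edge_avoiding_rev: "has_edge_avoiding e P \<Longrightarrow> has_edge_avoiding e (rev P)"
proof -
  assume "has_edge_avoiding e P"
  then obtain xs p q ys where "P = xs @ p # q # ys" "e \<notin> set p" "e \<notin> set q"
    by (auto simp: has_edge_avoiding_def)
  then have "rev P = rev ys @ q # p # rev xs" "e \<notin> set q" "e \<notin> set p" by simp_all
  then show ?thesis unfolding has_edge_avoiding_def by blast
qed

lemma has_edge_avoiding_map:
  assumes "has_edge_avoiding e P" "\<And>x. x \<in> set P \<Longrightarrow> e \<notin> set x \<Longrightarrow> e' \<notin> set (f x)"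
  shows "has_edge_avoiding e' (map f P)"
proof -
  obtain xs p q ys where P: "P = xs @ p # q # ys" "e \<notin> set p" "e \<notin> set q"
    using assms(1) by (auto simp: has_edge_avoiding_def)
  then have "map f P = map f xs @ f p # f q # map f ys" "e' \<notin> set (f p)" "e' \<notin> set (f q)"
    using assms(2) by auto
  then show ?thesis unfolding has_edge_avoiding_def by blast
qed

lemma has_edge_avoiding_if_rare:
  assumes "distinct P" "4 \<le> length P"
    and "\<And>x y. x \<in> set P \<Longrightarrow> y \<in> set P \<Longrightarrow> e \<in> set x \<Longrightarrow> e \<in> set y \<Longrightarrow> x = y"
  shows "has_edge_avoiding e P"
proof -
  from assms(2) have "Suc (Suc (Suc (Suc 0))) \<le> length P" by simp
  then obtain a b c d rest where P: "P = a # b # c # d # rest"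
    unfolding Suc_le_length_iff by blast
  show ?thesis
  proof (cases "e \<in> set a \<or> e \<in> set b")
    case True
    moreover have "a \<noteq> c" "a \<noteq> d" "b \<noteq> c" "b \<noteq> d" using assms(1) P by auto
    ultimately have "e \<notin> set c" "e \<notin> set d"
      using assms(3)[of a c] assms(3)[of a d] assms(3)[of b c] assms(3)[of b d] P by auto
    then show ?thesis unfolding P has_edge_avoiding_def by (metis append_Cons append_Nil)
  next
    case False
    then show ?thesis unfolding P has_edge_avoiding_def by (metis append_Nil)
  qed
qed

definition hamming :: "'a list \<Rightarrow> 'a list \<Rightarrow> nat" where
  "hamming p q = length (filter (\<lambda>(a, b). a \<noteq> b) (zip p q))"

lemma arr_adj_iff_hamming: "arr_adj p q \<longleftrightarrow> length p = length q \<and> hamming p q = 1"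
proof -
  have "card {j. j < length p \<and> p ! j \<noteq> q ! j} = hamming p q" if "length p = length q"
    unfolding hamming_def length_filter_conv_card using that by (auto intro: arg_cong[where f = card])
  then show ?thesis by (auto simp: arr_adj_def)
qed

lemma hamming_Cons [simp]: "hamming (a # p) (b # q) = (if a = b then 0 else 1) + hamming p q"
  by (simp add: hamming_def)

lemma hamming_eq_0_iff: "length p = length q \<Longrightarrow> hamming p q = 0 \<longleftrightarrow> p = q"
  by (induction p q rule: list_induct2) (auto simp: hamming_def)

lemma hamming_commute: "hamming p q = hamming q p"
  unfolding hamming_def by (induction p q rule: list_induct2') auto

lemma arr_adj_Cons:
  "arr_adj (a # p) (b # q) \<longleftrightarrow> length p = length q \<and> (if a = b then arr_adj p q else p = q)"
  by (auto simp: arr_adj_iff_hamming hamming_eq_0_iff)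

lemma symp_arr_adj: "symp arr_adj"
  by (auto intro: sympI simp: arr_adj_iff_hamming hamming_commute)

lemma hamming_map:
  "inj_on f (set p \<union> set q) \<Longrightarrow> hamming (map f p) (map f q) = hamming p q"
proof (induction p q rule: list_induct2')
  case (4 a p b q)
  have "f a = f b \<longleftrightarrow> a = b"
    using "4.prems" by (metis inj_on_eq_iff list.set_intros(1) UnI1 UnI2)
  moreover have "inj_on f (set p \<union> set q)"
    using "4.prems" by (auto intro: inj_on_subset)
  ultimately show ?case using "4.IH" by simp
qed (simp_all add: hamming_def)

lemma arr_adj_map: "inj_on f (set p \<union> set q) \<Longrightarrow> arr_adj (map f p) (map f q) \<longleftrightarrow> arr_adj p q"
  by (simp add: arr_adj_iff_hamming hamming_map)

lemma hamming_permute_list: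
  assumes "\<sigma> permutes {..<length p}" "length p = length q"
  shows "hamming (permute_list \<sigma> p) (permute_list \<sigma> q) = hamming p q"
proof -
  have "zip (permute_list \<sigma> p) (permute_list \<sigma> q) = permute_list \<sigma> (zip p q)"
    using assms by (simp add: permute_list_zip)
  moreover have "mset (permute_list \<sigma> (zip p q)) = mset (zip p q)"
    using assms by simp
  ultimately show ?thesis
    unfolding hamming_def by (metis mset_filter size_mset)
qed

lemma arr_adj_permute_list:
  assumes "\<sigma> permutes {..<length p}"
  shows "arr_adj (permute_list \<sigma> p) (permute_list \<sigma> q) \<longleftrightarrow> arr_adj p q"
  using assms by (auto simp: arr_adj_iff_hamming hamming_permute_list)

section \<open>Arrangements\<close>

(* arr_vertices n k is arrangements {1..n} k; the inductions need arbitrary symbol sets. *)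
definition arrangements :: "'a set \<Rightarrow> nat \<Rightarrow> 'a list set" where
  "arrangements T r = {xs. length xs = r \<and> distinct xs \<and> set xs \<subseteq> T}"

(* Only used for positive length: hd [] is unspecified. *)
definition arrangements_headed :: "'a set \<Rightarrow> nat \<Rightarrow> 'a set \<Rightarrow> 'a list set" where
  "arrangements_headed T r I = {p \<in> arrangements T r. hd p \<in> I}"

lemma arrangements_0 [simp]: "arrangements T 0 = {[]}"
  by (auto simp: arrangements_def)

lemma Cons_in_arrangements:
  "c # z \<in> arrangements T (Suc r) \<longleftrightarrow> c \<in> T \<and> z \<in> arrangements (T - {c}) r"
  by (auto simp: arrangements_def)

lemma arrangements_Suc: "arrangements T (Suc r) = (\<Union>c\<in>T. Cons c ` arrangements (T - {c}) r)"
proof (intro set_eqI iffI)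
  fix p assume "p \<in> arrangements T (Suc r)"
  then obtain c z where "p = c # z" "c # z \<in> arrangements T (Suc r)"
    by (cases p) (auto simp: arrangements_def)
  then show "p \<in> (\<Union>c\<in>T. Cons c ` arrangements (T - {c}) r)"
    by (auto simp: Cons_in_arrangements)
qed (auto simp: Cons_in_arrangements)

lemma hd_in_arrangements: "p \<in> arrangements T (Suc r) \<Longrightarrow> hd p \<in> T"
  by (cases p) (auto simp: arrangements_def)

lemma arrangements_mono: "S \<subseteq> T \<Longrightarrow> arrangements S r \<subseteq> arrangements T r"
  by (auto simp: arrangements_def)

lemma card_arrangements:
  "finite T \<Longrightarrow> r \<le> card T \<Longrightarrow> card (arrangements T r) = \<Prod>{card T - r + 1..card T}"
  unfolding arrangements_def by (rule card_lists_distinct_length_eq)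

lemma card_arrangements_ge:
  assumes "finite T" "1 \<le> r" "r \<le> card T"
  shows "card T \<le> card (arrangements T r)"
proof -
  have "card T \<le> \<Prod>{card T - r + 1..card T}"
    using assms by (intro dvd_imp_le dvd_prodI) (auto intro!: prod_pos)
  with card_arrangements[OF assms(1,3)] show ?thesis by simp
qed

lemma arrangements_nonempty: "finite T \<Longrightarrow> r \<le> card T \<Longrightarrow> arrangements T r \<noteq> {}"
  using card_arrangements[of T r] by (auto intro!: prod_pos)

lemma arrangement_avoiding_two:
  assumes "finite S" "1 \<le> r" "r \<le> card S" "3 \<le> card S"
  obtains z where "z \<in> arrangements S r" "z \<noteq> a" "z \<noteq> b"
proof -
  have "\<not> arrangements S r \<subseteq> {a, b}"
  proof
    assume "arrangements S r \<subseteq> {a, b}"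
    then have "card (arrangements S r) \<le> card {a, b}" by (simp add: card_mono)
    also have "\<dots> \<le> 2" by (simp add: card_insert_if)
    finally show False using card_arrangements_ge[OF assms(1-3)] assms(4) by linarith
  qed
  with that show ?thesis by blast
qed

lemma arrangements_headed_singleton:
  "c \<in> T \<Longrightarrow> arrangements_headed T (Suc r) {c} = Cons c ` arrangements (T - {c}) r"
  unfolding arrangements_headed_def arrangements_Suc by auto

lemma arrangements_headed_UN:
  "arrangements_headed T (Suc r) I = (\<Union>c\<in>I \<inter> T. arrangements_headed T (Suc r) {c})"
  unfolding arrangements_headed_def arrangements_Suc by fastforce

lemma arrangements_headed_all: "arrangements_headed T (Suc r) T = arrangements T (Suc r)"
  unfolding arrangements_headed_def arrangements_Suc by auto

lemma arrangements_headed_split: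
  "a \<in> I \<Longrightarrow> arrangements_headed T r I = arrangements_headed T r {a} \<union> arrangements_headed T r (I - {a})"
  by (auto simp: arrangements_headed_def)

lemma arrangements_headed_disjoint:
  "A \<inter> B = {} \<Longrightarrow> arrangements_headed T r A \<inter> arrangements_headed T r B = {}"
  by (auto simp: arrangements_headed_def)

lemma arrangements_map:
  assumes "inj_on g S"
  shows "map g ` arrangements S r = arrangements (g ` S) r"
proof
  show "map g ` arrangements S r \<subseteq> arrangements (g ` S) r"
    using assms by (fastforce simp: arrangements_def distinct_map intro: inj_on_subset)
  show "arrangements (g ` S) r \<subseteq> map g ` arrangements S r"
  proof
    fix p assume p: "p \<in> arrangements (g ` S) r"
    then have "p = map g (map (inv_into S g) p)"
      by (auto simp: arrangements_def f_inv_into_f intro!: map_idI[symmetric])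
    moreover have "map (inv_into S g) p \<in> arrangements S r"
      using p assms by (auto simp: arrangements_def distinct_map inv_into_into
          intro: inj_on_subset[OF inj_on_inv_into])
    ultimately show "p \<in> map g ` arrangements S r" by blast
  qed
qed

lemma arrangements_permute_list:
  assumes "\<sigma> permutes {..<r}"
  shows "permute_list \<sigma> ` arrangements T r = arrangements T r"
proof -
  have *: "permute_list \<tau> p \<in> arrangements T r" if "\<tau> permutes {..<r}" "p \<in> arrangements T r"
    for \<tau> p using that by (auto simp: arrangements_def)
  have "p = permute_list \<sigma> (permute_list (inv \<sigma>) p)" if "p \<in> arrangements T r" for p
    using that assms
    by (simp add: arrangements_def permute_list_compose[symmetric] permutes_inv permutes_inv_o)
  then show ?thesis using * assms permutes_inv by blast
qed

lemma permutes_transpose_0: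
  assumes "d < n"
  shows "Transposition.transpose 0 d permutes {..<n::nat}"
  using assms by (intro permutes_swap_id) auto

lemma permute_list_transpose_involutory:
  assumes "d < length p"
  shows "permute_list (Transposition.transpose 0 d) (permute_list (Transposition.transpose 0 d) p) = p"
  using permutes_transpose_0[OF assms] by (simp add: permute_list_compose[symmetric])

lemma hd_permute_list_transpose:
  assumes "d < length p"
  shows "hd (permute_list (Transposition.transpose 0 d) p) = p ! d"
proof -
  have "permute_list (Transposition.transpose 0 d) p \<noteq> []"
    using assms by (metis length_permute_list list.size(3) not_less0)
  then have "hd (permute_list (Transposition.transpose 0 d) p)
      = permute_list (Transposition.transpose 0 d) p ! 0" by (rule hd_conv_nth)
  also have "\<dots> = p ! d"
    using assms permutes_transpose_0[OF assms] by (subst permute_list_nth) auto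
  finally show ?thesis .
qed

lemma inj_on_permute_list:
  assumes "\<sigma> permutes {..<r}"
  shows "inj_on (permute_list \<sigma>) {xs. length xs = r}"
proof (rule inj_onI)
  fix p q assume pq: "p \<in> {xs. length xs = r}" "q \<in> {xs. length xs = r}"
    and "permute_list \<sigma> p = permute_list \<sigma> q"
  then have "permute_list (inv \<sigma>) (permute_list \<sigma> p) = permute_list (inv \<sigma>) (permute_list \<sigma> q)"
    by simp
  with pq show "p = q"
    using assms by (simp add: permute_list_compose[symmetric] permutes_inv permutes_inv_o)
qed

lemma ham_path_permute_list:
  assumes "\<sigma> permutes {..<r}" "ham_path arr_adj (arrangements T r) u v P"
  shows "ham_path arr_adj (arrangements T r) (permute_list \<sigma> u) (permute_list \<sigma> v)
    (map (permute_list \<sigma>) P)"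
proof -
  have "inj_on (permute_list \<sigma>) (arrangements T r)"
    using inj_on_permute_list[OF assms(1)] by (rule inj_on_subset) (auto simp: arrangements_def)
  then have "ham_path arr_adj (permute_list \<sigma> ` arrangements T r) (permute_list \<sigma> u)
      (permute_list \<sigma> v) (map (permute_list \<sigma>) P)"
    using assms by (intro ham_path_map) (auto simp: arr_adj_permute_list arrangements_def)
  then show ?thesis by (simp only: arrangements_permute_list[OF assms(1)])
qed

lemma hamiltonian_connected_permute_list:
  assumes "\<sigma> permutes {..<r}" "V \<subseteq> {xs. length xs = r}" "hamiltonian_connected arr_adj V"
  shows "hamiltonian_connected arr_adj (permute_list \<sigma> ` V)"
  using assms(3)
proof (rule hamiltonian_connected_image)
  show "inj_on (permute_list \<sigma>) V"
    using inj_on_permute_list[OF assms(1)] assms(2) by (rule inj_on_subset)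
  show "arr_adj (permute_list \<sigma> x) (permute_list \<sigma> y)" if "x \<in> V" "arr_adj x y" for x y
    using that assms(1,2) arr_adj_permute_list[of \<sigma> x y] by auto
qed

lemma permute_list_transpose_arrangements_headed:
  assumes "d < r"
  shows "permute_list (Transposition.transpose 0 d) ` arrangements_headed T r I
    = {p \<in> arrangements T r. p ! d \<in> I}"
    (is "?f ` _ = _")
proof -
  have \<tau>: "Transposition.transpose 0 d permutes {..<r}" by (rule permutes_transpose_0[OF assms])
  have nth_d: "?f q ! d = hd q" if "length q = r" for q
  proof -
    have "q \<noteq> []" using that assms by auto
    then show ?thesis using that assms \<tau> by (simp add: permute_list_nth hd_conv_nth)
  qed
  show ?thesis
  proof (intro set_eqI iffI)
    fix p assume "p \<in> ?f ` arrangements_headed T r I"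
    then obtain q where "p = ?f q" "q \<in> arrangements T r" "hd q \<in> I"
      by (auto simp: arrangements_headed_def)
    then show "p \<in> {p \<in> arrangements T r. p ! d \<in> I}"
      using arrangements_permute_list[OF \<tau>] nth_d by (auto simp: arrangements_def)
  next
    fix p assume p: "p \<in> {p \<in> arrangements T r. p ! d \<in> I}"
    then have "length p = r" by (simp add: arrangements_def)
    then have "p = ?f (?f p)" "hd (?f p) = p ! d"
      using assms by (simp_all add: permute_list_transpose_involutory hd_permute_list_transpose)
    moreover have "?f p \<in> arrangements T r" using p arrangements_permute_list[OF \<tau>] by blast
    ultimately show "p \<in> ?f ` arrangements_headed T r I"
      using p by (auto simp: arrangements_headed_def)
  qed
qed

lemma ham_path_by_distinct_heads:
  assumes heads: "\<And>u v. u \<in> arrangements T r \<Longrightarrow> v \<in> arrangements T r \<Longrightarrow> hd u \<noteq> hd v \<Longrightarrow>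
      \<exists>P. ham_path arr_adj (arrangements T r) u v P \<and> Q P"
    and invariant: "\<And>\<sigma> P. \<sigma> permutes {..<r} \<Longrightarrow> set P \<subseteq> arrangements T r \<Longrightarrow> Q P \<Longrightarrow>
      Q (map (permute_list \<sigma>) P)"
    and u: "u \<in> arrangements T r" and v: "v \<in> arrangements T r" and "u \<noteq> v"
  shows "\<exists>P. ham_path arr_adj (arrangements T r) u v P \<and> Q P"
proof -
  have len: "length u = r" "length v = r" using u v by (simp_all add: arrangements_def)
  with \<open>u \<noteq> v\<close> obtain d where d: "d < r" "u ! d \<noteq> v ! d"
    using nth_equalityI by metis
  define \<tau> where "\<tau> = Transposition.transpose 0 d"
  have \<tau>: "\<tau> permutes {..<r}" using d(1) by (simp add: \<tau>_def permutes_transpose_0)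
  have "permute_list \<tau> u \<in> arrangements T r" "permute_list \<tau> v \<in> arrangements T r"
    using arrangements_permute_list[OF \<tau>, of T] u v by blast+
  moreover have "hd (permute_list \<tau> u) \<noteq> hd (permute_list \<tau> v)"
    using d len by (simp add: \<tau>_def hd_permute_list_transpose)
  ultimately obtain P where P: "ham_path arr_adj (arrangements T r) (permute_list \<tau> u) (permute_list \<tau> v) P"
    and "Q P" using heads by blast
  then have "Q (map (permute_list \<tau>) P)" using invariant[OF \<tau>] by (simp add: ham_path_def)
  moreover have "ham_path arr_adj (arrangements T r) u v (map (permute_list \<tau>) P)"
    using ham_path_permute_list[OF \<tau> P] d(1) len
    by (simp add: \<tau>_def permute_list_transpose_involutory)
  ultimately show ?thesis by blast
qed

section \<open>Decomposition into blocks of equal head\<close>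

lemma hamiltonian_connected_block:
  assumes "c \<in> T" "hamiltonian_connected arr_adj (arrangements (T - {c}) r)"
  shows "hamiltonian_connected arr_adj (arrangements_headed T (Suc r) {c})"
  unfolding arrangements_headed_singleton[OF assms(1)]
  by (rule hamiltonian_connected_image[OF assms(2)]) (auto simp: arrangements_def arr_adj_Cons)

lemma ham_path_block:
  assumes "c \<in> T" "ham_path arr_adj (arrangements (T - {c}) r) y z P"
  shows "ham_path arr_adj (arrangements_headed T (Suc r) {c}) (c # y) (c # z) (map (Cons c) P)"
  unfolding arrangements_headed_singleton[OF assms(1)]
  by (rule ham_path_map[OF assms(2)]) (auto simp: arrangements_def arr_adj_Cons)

lemma linked_blocks:
  assumes "finite T" "r + 3 \<le> card T" "5 \<le> card T \<or> r = 0"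
    and "c \<in> T" "c' \<in> T" "c \<noteq> c'"
  shows "linked arr_adj (arrangements_headed T (Suc r) {c}) (arrangements_headed T (Suc r) {c'})"
  unfolding linked_def arrangements_headed_singleton[OF assms(4)]
    arrangements_headed_singleton[OF assms(5)]
proof (intro ballI)
  fix y w assume "y \<in> Cons c ` arrangements (T - {c}) r" "w \<in> Cons c' ` arrangements (T - {c'}) r"
  then obtain y' w' where y: "y = c # y'" "y' \<in> arrangements (T - {c}) r"
    and w: "w = c' # w'" "w' \<in> arrangements (T - {c'}) r" by blast
  show "\<exists>x x'. arr_adj x x' \<and> admissible_ends (Cons c ` arrangements (T - {c}) r) y x
      \<and> admissible_ends (Cons c' ` arrangements (T - {c'}) r) x' w"
  proof (cases "r = 0")
    case True
    then have "y = [c]" "w = [c']" using y w by auto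
    moreover have "arr_adj [c] [c']" using assms(6) by (simp add: arr_adj_Cons)
    ultimately show ?thesis using True by (auto simp: admissible_ends_def)
  next
    case False
    have "card (T - {c, c'}) = card T - 2"
      using assms(1,4-6) by (simp add: card_Diff_subset)
    then have "finite (T - {c, c'})" "1 \<le> r" "r \<le> card (T - {c, c'})" "3 \<le> card (T - {c, c'})"
      using assms(1-3) False by auto
    then obtain z where z: "z \<in> arrangements (T - {c, c'}) r" "z \<noteq> y'" "z \<noteq> w'"
      by (rule arrangement_avoiding_two)
    have "z \<in> arrangements (T - {c}) r" "z \<in> arrangements (T - {c'}) r"
      using z(1) arrangements_mono[of "T - {c, c'}" "T - {c}" r]
        arrangements_mono[of "T - {c, c'}" "T - {c'}" r] by auto
    then have "c # z \<in> Cons c ` arrangements (T - {c}) r"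
      "c' # z \<in> Cons c' ` arrangements (T - {c'}) r" by simp_all
    moreover have "arr_adj (c # z) (c' # z)" using assms(6) by (simp add: arr_adj_Cons)
    ultimately show ?thesis using z y w unfolding admissible_ends_def by blast
  qed
qed

lemma ham_path_leaving_head_block:
  assumes T: "finite T" "r + 3 \<le> card T" "5 \<le> card T \<or> r = 0"
    and hc: "\<forall>c\<in>T. hamiltonian_connected arr_adj (arrangements (T - {c}) r)"
    and u: "u \<in> arrangements_headed T (Suc r) I" and v: "v \<in> arrangements_headed T (Suc r) I"
    and uv: "hd u \<noteq> hd v"
  shows "\<exists>x x' Q. admissible_ends (arrangements_headed T (Suc r) {hd u}) u x \<and> arr_adj x x'
    \<and> ham_path arr_adj (arrangements_headed T (Suc r) (I - {hd u})) x' v Q"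
proof -
  let ?B = "\<lambda>c. arrangements_headed T (Suc r) {c}"
  define a b where "a = hd u" and "b = hd v"
  have ab: "a \<in> I \<inter> T" "b \<in> I \<inter> T"
    using u v hd_in_arrangements by (auto simp: arrangements_headed_def a_def b_def)
  define cs where "cs = sorted_list_of_set (I \<inter> T - {a, b}) @ [b]"
  have fin: "finite (I \<inter> T - {a, b})" using T(1) by simp
  have set_cs: "set cs = (I - {a}) \<inter> T"
    using ab uv fin by (auto simp: cs_def a_def b_def)
  have distinct: "distinct (a # cs)" using fin uv by (auto simp: cs_def a_def b_def)
  have blocks: "\<forall>c\<in>set cs. ?B c \<noteq> {} \<and> hamiltonian_connected arr_adj (?B c)"
  proof
    fix c assume "c \<in> set cs"
    then have c: "c \<in> T" using set_cs by simp
    have "arrangements (T - {c}) r \<noteq> {}"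
      using T c by (intro arrangements_nonempty) auto
    then show "?B c \<noteq> {} \<and> hamiltonian_connected arr_adj (?B c)"
      using hamiltonian_connected_block[of c T r] hc c arrangements_headed_singleton[OF c] by auto
  qed
  have links: "\<forall>c\<in>set (a # cs). \<forall>c'\<in>set (a # cs).
      c \<noteq> c' \<longrightarrow> ?B c \<inter> ?B c' = {} \<and> linked arr_adj (?B c) (?B c')"
  proof (intro ballI impI conjI)
    fix c c' assume c: "c \<in> set (a # cs)" "c' \<in> set (a # cs)" "c \<noteq> c'"
    then show "?B c \<inter> ?B c' = {}" by (intro arrangements_headed_disjoint) auto
    show "linked arr_adj (?B c) (?B c')"
      using c ab(1) set_cs by (intro linked_blocks[OF T]) auto
  qed
  have "u \<in> ?B a" "v \<in> ?B (last cs)"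
    using u v by (auto simp: arrangements_headed_def a_def b_def cs_def)
  from ham_path_through_blocks[OF distinct _ blocks links this]
  have "\<exists>x x' Q. admissible_ends (?B a) u x \<and> arr_adj x x' \<and> ham_path arr_adj (\<Union>c\<in>set cs. ?B c) x' v Q"
    by (simp add: cs_def)
  moreover have "(\<Union>c\<in>set cs. ?B c) = arrangements_headed T (Suc r) (I - {a})"
    using arrangements_headed_UN[of T r "I - {a}"] set_cs by simp
  ultimately show ?thesis by (simp add: a_def)
qed

lemma ham_path_distinct_heads:
  assumes T: "finite T" "r + 3 \<le> card T" "5 \<le> card T \<or> r = 0"
    and hc: "\<forall>c\<in>T. hamiltonian_connected arr_adj (arrangements (T - {c}) r)"
    and u: "u \<in> arrangements_headed T (Suc r) I" and v: "v \<in> arrangements_headed T (Suc r) I"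
    and uv: "hd u \<noteq> hd v"
  obtains P where "ham_path arr_adj (arrangements_headed T (Suc r) I) u v P"
proof -
  let ?B = "arrangements_headed T (Suc r) {hd u}"
  obtain x x' Q where x: "admissible_ends ?B u x" "arr_adj x x'"
    and Q: "ham_path arr_adj (arrangements_headed T (Suc r) (I - {hd u})) x' v Q"
    using ham_path_leaving_head_block[OF assms] by blast
  have "hd u \<in> T" "hd u \<in> I"
    using u hd_in_arrangements by (auto simp: arrangements_headed_def)
  with hc hamiltonian_connected_block have "hamiltonian_connected arr_adj ?B" by blast
  from this x(1) obtain P where "ham_path arr_adj ?B u x P" by (rule hamiltonian_connected_ham_path)
  from ham_path_append[OF this Q _ x(2)] show ?thesis
    using that arrangements_headed_split[OF \<open>hd u \<in> I\<close>] arrangements_headed_disjoint[of "{hd u}" "I - {hd u}"]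
    by auto
qed

section \<open>The arrangement graph A(4,2)\<close>

(* In A(4,2) the blocks are triangles with only two symbols left to link them, so the block
   argument fails; by relabelling the symbols, paths starting at [0, 1] suffice. *)
definition A42_vertices :: "nat list list" where
  "A42_vertices = [[0,1],[0,2],[0,3],[1,0],[1,2],[1,3],[2,0],[2,1],[2,3],[3,0],[3,1],[3,2]]"

definition A42_paths :: "nat list list list" where
  "A42_paths =
    [[[0,1],[0,3],[1,3],[1,0],[2,0],[2,3],[2,1],[3,1],[3,0],[3,2],[1,2],[0,2]],
     [[0,1],[0,2],[1,2],[1,0],[2,0],[3,0],[3,2],[3,1],[2,1],[2,3],[1,3],[0,3]],
     [[0,1],[0,2],[0,3],[1,3],[1,2],[3,2],[3,0],[3,1],[2,1],[2,3],[2,0],[1,0]],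
     [[0,1],[0,2],[0,3],[1,3],[1,0],[2,0],[2,3],[2,1],[3,1],[3,0],[3,2],[1,2]],
     [[0,1],[0,2],[0,3],[2,3],[2,0],[2,1],[3,1],[3,0],[3,2],[1,2],[1,0],[1,3]],
     [[0,1],[0,2],[0,3],[1,3],[1,0],[1,2],[3,2],[3,0],[3,1],[2,1],[2,3],[2,0]],
     [[0,1],[0,2],[0,3],[1,3],[1,0],[1,2],[3,2],[3,1],[3,0],[2,0],[2,3],[2,1]],
     [[0,1],[0,2],[0,3],[1,3],[1,0],[1,2],[3,2],[3,0],[3,1],[2,1],[2,0],[2,3]],
     [[0,1],[0,2],[0,3],[1,3],[1,0],[1,2],[3,2],[3,1],[2,1],[2,3],[2,0],[3,0]],
     [[0,1],[0,2],[0,3],[1,3],[1,0],[1,2],[3,2],[3,0],[2,0],[2,3],[2,1],[3,1]],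
     [[0,1],[0,2],[0,3],[1,3],[1,2],[1,0],[2,0],[2,3],[2,1],[3,1],[3,0],[3,2]]]"

lemma A42_paths_check:
  "\<forall>P\<in>set A42_paths. hd P = [0, 1] \<and> distinct P \<and> length P = 12 \<and> set P \<subseteq> set A42_vertices
     \<and> successively arr_adj P \<and> (\<forall>e\<in>{0, 1, 2, 3}. has_edge_avoiding e P)"
  by (simp add: A42_paths_def A42_vertices_def arr_adj_iff_hamming hamming_def has_edge_avoiding_iff)

lemma A42_paths_last: "map last A42_paths = tl A42_vertices"
  by (simp add: A42_paths_def A42_vertices_def)

lemma arrangements_A42: "arrangements {..<4::nat} 2 = set A42_vertices"
proof (intro set_eqI iffI)
  fix p :: "nat list" assume "p \<in> arrangements {..<4} 2"
  then obtain a b where "p = [a, b]" "a \<noteq> b" "a < 4" "b < 4"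
    by (auto simp: arrangements_def numeral_2_eq_2 length_Suc_conv)
  moreover from this have "a \<in> {0, 1, 2, 3}" "b \<in> {0, 1, 2, 3}" by auto
  ultimately show "p \<in> set A42_vertices" by (auto simp: A42_vertices_def)
qed (auto simp: A42_vertices_def arrangements_def)

lemma ham_path_A42:
  assumes "v \<in> arrangements {..<4} 2" "v \<noteq> [0, 1]"
  obtains P where "ham_path arr_adj (arrangements {..<4} 2) [0, 1] v P"
    "\<forall>e<4. has_edge_avoiding e P"
proof -
  have "v \<in> set (map last A42_paths)"
    using assms unfolding A42_paths_last arrangements_A42 by (simp add: A42_vertices_def)
  then obtain P where "P \<in> set A42_paths" "last P = v" by auto
  with A42_paths_check have P: "hd P = [0, 1]" "distinct P" "length P = 12" "set P \<subseteq> set A42_vertices"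
    "successively arr_adj P" "\<forall>e\<in>{0, 1, 2, 3}. has_edge_avoiding e P"
    by auto
  have "\<forall>e<4. has_edge_avoiding e P"
  proof (intro allI impI)
    fix e :: nat assume "e < 4"
    then have "e \<in> {0, 1, 2, 3}" by auto
    with P(6) show "has_edge_avoiding e P" by blast
  qed
  have "card (set A42_vertices) = 12" by (simp add: A42_vertices_def)
  then have "set P = set A42_vertices"
    using P(2-4) by (intro card_subset_eq) (auto simp: distinct_card)
  with P \<open>last P = v\<close> have "ham_path arr_adj (arrangements {..<4} 2) [0, 1] v P"
    unfolding ham_path_iff arrangements_A42 by auto
  then show ?thesis using \<open>\<forall>e<4. has_edge_avoiding e P\<close> by (rule that)
qed

lemma relabelling_to_initial_segment:
  fixes T :: "'a::linorder set"
  assumes "finite T" "u \<in> arrangements T r"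
  obtains g where "bij_betw g {..<card T} T" "map g [0..<r] = u"
proof -
  define xs where "xs = u @ sorted_list_of_set (T - set u)"
  have xs: "distinct xs" "set xs = T" and "length u = r"
    using assms by (auto simp: xs_def arrangements_def)
  then have "bij_betw ((!) xs) {..<card T} T"
    by (intro bij_betw_nth) (auto simp: distinct_card[symmetric])
  moreover have "map ((!) xs) [0..<r] = u"
    using \<open>length u = r\<close> by (intro nth_equalityI) (auto simp: xs_def nth_append)
  ultimately show ?thesis by (rule that)
qed

lemma ham_path_arrangements_card_4:
  assumes T: "finite T" "card T = 4"
    and uv: "u \<in> arrangements T 2" "v \<in> arrangements T 2" "u \<noteq> v"
  obtains P where "ham_path arr_adj (arrangements T 2) u v P" "\<forall>e\<in>T. has_edge_avoiding e P"
proof -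
  obtain g where g: "bij_betw g {..<4::nat} T" and "map g [0..<2] = u"
    using relabelling_to_initial_segment[OF T(1) uv(1)] T(2) by metis
  then have gu: "map g [0, 1] = u" by (simp add: upt_rec)
  have inj: "inj_on g {..<4}" and img: "g ` {..<4} = T" using g by (auto simp: bij_betw_def)
  have arr: "map g ` arrangements {..<4} 2 = arrangements T 2"
    using arrangements_map[OF inj] img by simp
  then obtain v' where v': "v' \<in> arrangements {..<4} 2" "v = map g v'" using uv(2) by auto
  with gu uv(3) have "v' \<noteq> [0, 1]" by auto
  with v'(1) obtain P where P: "ham_path arr_adj (arrangements {..<4} 2) [0, 1] v' P"
    and avoid: "\<forall>e<4. has_edge_avoiding e P" by (rule ham_path_A42)
  have sub: "x \<in> arrangements {..<4} 2 \<Longrightarrow> set x \<subseteq> {..<4::nat}" for x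
    by (simp add: arrangements_def)
  have "ham_path arr_adj (map g ` arrangements {..<4} 2) (map g [0, 1]) (map g v') (map (map g) P)"
  proof (rule ham_path_map[OF P])
    show "inj_on (map g) (arrangements {..<4} 2)"
      using sub by (intro inj_on_mapI inj_on_subset[OF inj]) auto
    show "arr_adj (map g x) (map g y)" if "x \<in> arrangements {..<4} 2" "y \<in> arrangements {..<4} 2"
      "arr_adj x y" for x y
      using that sub by (subst arr_adj_map) (auto intro: inj_on_subset[OF inj])
  qed
  moreover have "has_edge_avoiding e (map (map g) P)" if "e \<in> T" for e
  proof -
    obtain e' where e': "e' < 4" "e = g e'" using \<open>e \<in> T\<close> img by auto
    show ?thesis
    proof (rule has_edge_avoiding_map[of e'])
      show "has_edge_avoiding e' P" using avoid e'(1) by blast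
      fix x assume "x \<in> set P" "e' \<notin> set x"
      moreover have "set P = arrangements {..<4} 2" using P by (simp add: ham_path_iff)
      ultimately show "e \<notin> set (map g x)"
        using sub e' inj_on_image_mem_iff[OF inj] by auto
    qed
  qed
  ultimately show ?thesis using that arr gu v'(2) by auto
qed

section \<open>Hamiltonian connectivity\<close>

lemma hamiltonian_connected_arrangements:
  assumes "finite T" "r + 2 \<le> card T"
  shows "hamiltonian_connected arr_adj (arrangements T r)"
  using assms
proof (induction r arbitrary: T)
  case 0
  then show ?case by (simp add: hamiltonian_connected_def)
next
  case (Suc r)
  have hc: "\<forall>c\<in>T. hamiltonian_connected arr_adj (arrangements (T - {c}) r)"
    using Suc by simp
  show ?case unfolding hamiltonian_connected_def
  proof (intro ballI impI)
    fix u v assume uv: "u \<in> arrangements T (Suc r)" "v \<in> arrangements T (Suc r)" "u \<noteq> v"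
    show "\<exists>P. ham_path arr_adj (arrangements T (Suc r)) u v P"
    proof (cases "card T = 4 \<and> r = 1")
      case True
      with Suc.prems(1) uv show ?thesis
        by (metis ham_path_arrangements_card_4 numeral_2_eq_2 One_nat_def)
    next
      case False
      then have T: "r + 3 \<le> card T" "5 \<le> card T \<or> r = 0" using Suc.prems(2) by auto
      have "\<exists>P. ham_path arr_adj (arrangements T (Suc r)) u v P"
        if "u \<in> arrangements T (Suc r)" "v \<in> arrangements T (Suc r)" "hd u \<noteq> hd v" for u v
        using ham_path_distinct_heads[OF Suc.prems(1) T hc, of u T v] that
        by (metis arrangements_headed_all)
      then show ?thesis
        using ham_path_by_distinct_heads[OF _ _ uv, where Q = "\<lambda>_. True"] by blast
    qed
  qed
qed

lemma ham_path_avoiding_distinct_heads: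
  assumes T: "finite T" "r + 3 \<le> card T" "5 \<le> card T" "1 \<le> r"
    and hc: "\<forall>c\<in>T. hamiltonian_connected arr_adj (arrangements (T - {c}) r)"
    and u: "u \<in> arrangements T (Suc r)" and v: "v \<in> arrangements T (Suc r)"
    and heads: "hd u \<noteq> hd v" "hd u \<noteq> e"
    and block: "\<And>y z. y \<in> arrangements (T - {hd u}) r \<Longrightarrow> z \<in> arrangements (T - {hd u}) r \<Longrightarrow>
      y \<noteq> z \<Longrightarrow> \<exists>P. ham_path arr_adj (arrangements (T - {hd u}) r) y z P \<and> has_edge_avoiding e P"
  shows "\<exists>P. ham_path arr_adj (arrangements T (Suc r)) u v P \<and> has_edge_avoiding e P"
proof -
  define a where "a = hd u"
  let ?B = "arrangements_headed T (Suc r) {a}"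
  have a: "a \<in> T" using u hd_in_arrangements by (simp add: a_def)
  have B: "?B = Cons a ` arrangements (T - {a}) r" by (rule arrangements_headed_singleton[OF a])
  have uv: "u \<in> arrangements_headed T (Suc r) T" "v \<in> arrangements_headed T (Suc r) T"
    using u v by (simp_all add: arrangements_headed_all)
  obtain x x' Q where x: "admissible_ends ?B u x" "arr_adj x x'"
    and Q: "ham_path arr_adj (arrangements_headed T (Suc r) (T - {a})) x' v Q"
    using ham_path_leaving_head_block[OF T(1,2) _ hc uv heads(1)] T(3) by (auto simp: a_def)
  have Ta: "finite (T - {a})" "r \<le> card (T - {a})" "4 \<le> card (T - {a})"
    using T a by simp_all
  have "4 \<le> card (T - {a})" by (fact Ta(3))
  also have "\<dots> \<le> card (arrangements (T - {a}) r)"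
    using Ta(1) T(4) Ta(2) by (rule card_arrangements_ge)
  also have "\<dots> = card ?B" unfolding B by (simp add: card_image)
  finally have "?B \<noteq> {u}" by (intro notI) simp
  with x(1) have "u \<in> ?B" "x \<in> ?B" "u \<noteq> x" unfolding admissible_ends_def by auto
  obtain u' where u': "u = a # u'" "u' \<in> arrangements (T - {a}) r"
    using \<open>u \<in> ?B\<close> unfolding B by blast
  obtain x'' where x'': "x = a # x''" "x'' \<in> arrangements (T - {a}) r"
    using \<open>x \<in> ?B\<close> unfolding B by blast
  have "u' \<noteq> x''" using \<open>u \<noteq> x\<close> u'(1) x''(1) by blast
  with block[unfolded a_def[symmetric]] u'(2) x''(2) obtain P
    where P: "ham_path arr_adj (arrangements (T - {a}) r) u' x'' P" "has_edge_avoiding e P"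
    by blast
  have "ham_path arr_adj (?B \<union> arrangements_headed T (Suc r) (T - {a})) u v (map (Cons a) P @ Q)"
    using ham_path_append[OF ham_path_block[OF a P(1)] Q _ x(2)[unfolded x''(1)]] u'(1)
      arrangements_headed_disjoint[of "{a}" "T - {a}"] by simp
  moreover have "?B \<union> arrangements_headed T (Suc r) (T - {a}) = arrangements T (Suc r)"
    using arrangements_headed_split[OF a, of T "Suc r"] by (simp add: arrangements_headed_all)
  moreover have "has_edge_avoiding e (map (Cons a) P @ Q)"
    using P(2) heads(2) by (intro has_edge_avoiding_append has_edge_avoiding_map[of e]) (auto simp: a_def)
  ultimately show ?thesis by auto
qed

lemma ham_path_arrangements_1_avoiding:
  assumes "finite T" "4 \<le> card T"
    and "u \<in> arrangements T 1" "v \<in> arrangements T 1" "u \<noteq> v"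
  shows "\<exists>P. ham_path arr_adj (arrangements T 1) u v P \<and> has_edge_avoiding e P"
proof -
  obtain P where P: "ham_path arr_adj (arrangements T 1) u v P"
    using hamiltonian_connected_arrangements[of T 1] assms unfolding hamiltonian_connected_def by auto
  have "card T \<le> card (arrangements T 1)" using assms by (intro card_arrangements_ge) auto
  then have "4 \<le> length P"
    using P assms(2) by (auto simp: ham_path_iff distinct_card[symmetric])
  moreover have "x = y" if "x \<in> set P" "y \<in> set P" "e \<in> set x" "e \<in> set y" for x y
    using that P by (auto simp: ham_path_iff arrangements_def length_Suc_conv)
  ultimately have "has_edge_avoiding e P"
    using P by (intro has_edge_avoiding_if_rare) (auto simp: ham_path_iff)
  with P show ?thesis by auto
qed

lemma ham_path_arrangements_avoiding:
  assumes "finite T" "r + 3 \<le> card T" "4 \<le> card T" "e \<in> T"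
    and "u \<in> arrangements T (Suc r)" "v \<in> arrangements T (Suc r)" "u \<noteq> v"
  shows "\<exists>P. ham_path arr_adj (arrangements T (Suc r)) u v P \<and> has_edge_avoiding e P"
  using assms
proof (induction r arbitrary: T u v)
  case 0
  then show ?case using ham_path_arrangements_1_avoiding[of T u v e] by simp
next
  case (Suc r)
  show ?case
  proof (cases "card T = 4")
    case True
    then have "Suc (Suc r) = 2" using Suc.prems(2) by simp
    with Suc.prems True show ?thesis
      by (metis ham_path_arrangements_card_4)
  next
    case False
    then have T: "finite T" "Suc r + 3 \<le> card T" "5 \<le> card T" "1 \<le> Suc r"
      using Suc.prems by auto
    have hc: "\<forall>c\<in>T. hamiltonian_connected arr_adj (arrangements (T - {c}) (Suc r))"
      using T by (auto intro: hamiltonian_connected_arrangements)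
    have avoid: "\<exists>P. ham_path arr_adj (arrangements T (Suc (Suc r))) u v P \<and> has_edge_avoiding e P"
      if "u \<in> arrangements T (Suc (Suc r))" "v \<in> arrangements T (Suc (Suc r))"
        "hd u \<noteq> hd v" "hd u \<noteq> e" for u v
    proof (rule ham_path_avoiding_distinct_heads[OF T hc that])
      fix y z assume "y \<in> arrangements (T - {hd u}) (Suc r)" "z \<in> arrangements (T - {hd u}) (Suc r)"
        "y \<noteq> z"
      moreover have "hd u \<in> T" using that(1) by (rule hd_in_arrangements)
      ultimately show "\<exists>P. ham_path arr_adj (arrangements (T - {hd u}) (Suc r)) y z P \<and> has_edge_avoiding e P"
        using Suc.prems(2-4) T(1,3) that(4) by (intro Suc.IH) auto
    qed
    show ?thesis
    proof (rule ham_path_by_distinct_heads[OF _ _ Suc.prems(5-7)])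
      fix u v assume uv: "u \<in> arrangements T (Suc (Suc r))" "v \<in> arrangements T (Suc (Suc r))"
        "hd u \<noteq> hd v"
      show "\<exists>P. ham_path arr_adj (arrangements T (Suc (Suc r))) u v P \<and> has_edge_avoiding e P"
      proof (cases "hd u = e")
        case True
        with uv(3) have "hd v \<noteq> hd u" "hd v \<noteq> e" by auto
        with avoid[OF uv(2,1)] obtain P where
          P: "ham_path arr_adj (arrangements T (Suc (Suc r))) v u P" "has_edge_avoiding e P"
          by blast
        show ?thesis
          using ham_path_rev[OF P(1) symp_arr_adj] has_edge_avoiding_rev[OF P(2)] by blast
      qed (use uv avoid in auto)
    next
      fix \<sigma> P assume "\<sigma> permutes {..<Suc (Suc r)}" "set P \<subseteq> arrangements T (Suc (Suc r))"
        "has_edge_avoiding e P"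
      then show "has_edge_avoiding e (map (permute_list \<sigma>) P)"
        by (intro has_edge_avoiding_map[of e]) (auto simp: arrangements_def)
    qed
  qed
qed

lemma ham_path_block_detour:
  assumes T: "finite T" "5 \<le> card T" "r + 3 \<le> card T"
    and IH: "hamiltonian_connected arr_adj (arrangements_headed T (Suc r) (I - {c}))"
    and c: "c \<in> T" and j: "j \<in> I" "j \<in> T" "j \<noteq> c"
    and uv: "u \<in> arrangements (T - {c}) r" "v \<in> arrangements (T - {c}) r" "u \<noteq> v"
  shows "\<exists>P. ham_path arr_adj
    (arrangements_headed T (Suc r) {c} \<union> arrangements_headed T (Suc r) (I - {c})) (c # u) (c # v) P"
proof -
  let ?B = "arrangements_headed T (Suc r) {c}" and ?R = "arrangements_headed T (Suc r) (I - {c})"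
  obtain r' where r': "r = Suc r'" using uv by (cases r) (auto simp: arrangements_def)
  have "\<exists>P. ham_path arr_adj (arrangements (T - {c}) r) u v P \<and> has_edge_avoiding j P"
    unfolding r' using T c j uv r' by (intro ham_path_arrangements_avoiding) auto
  then obtain xs w z ys where P: "ham_path arr_adj (arrangements (T - {c}) r) u v (xs @ w # z # ys)"
    and wz: "j \<notin> set w" "j \<notin> set z"
    unfolding has_edge_avoiding_def by blast
  have "w \<in> arrangements (T - {c}) r" "z \<in> arrangements (T - {c}) r" "w \<noteq> z"
    using P by (auto simp: ham_path_iff)
  then have "j # w \<in> ?R" "j # z \<in> ?R" "j # w \<noteq> j # z"
    using j wz by (auto simp: arrangements_headed_def arrangements_def)
  with IH obtain Q where Q: "ham_path arr_adj ?R (j # w) (j # z) Q"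
    unfolding hamiltonian_connected_def by blast
  have "ham_path arr_adj ?B (c # u) (c # v) (map (Cons c) xs @ (c # w) # (c # z) # map (Cons c) ys)"
    using ham_path_block[OF c P] by simp
  from ham_path_insert_between[OF this Q] show ?thesis
    using arrangements_headed_disjoint[of "{c}" "I - {c}"] j(3) by (auto simp: arr_adj_Cons)
qed

lemma ham_path_same_head:
  assumes T: "finite T" "5 \<le> card T" "r + 3 \<le> card T"
    and IH: "hamiltonian_connected arr_adj (arrangements_headed T (Suc r) (I - {c}))"
    and c: "c \<in> I" "hd u = c" "hd v = c"
    and u: "u \<in> arrangements_headed T (Suc r) I" and v: "v \<in> arrangements_headed T (Suc r) I"
    and "u \<noteq> v"
  shows "\<exists>P. ham_path arr_adj (arrangements_headed T (Suc r) I) u v P"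
proof -
  let ?B = "arrangements_headed T (Suc r) {c}" and ?R = "arrangements_headed T (Suc r) (I - {c})"
  have "c \<in> T" using u c(2) hd_in_arrangements by (auto simp: arrangements_headed_def)
  have split: "arrangements_headed T (Suc r) I = ?B \<union> ?R"
    using arrangements_headed_split[OF c(1)] .
  have "u \<in> ?B" "v \<in> ?B" using u v c by (auto simp: arrangements_headed_def)
  then obtain u' v' where u': "u = c # u'" "u' \<in> arrangements (T - {c}) r"
    and v': "v = c # v'" "v' \<in> arrangements (T - {c}) r"
    unfolding arrangements_headed_singleton[OF \<open>c \<in> T\<close>] by blast
  with \<open>u \<noteq> v\<close> have "u' \<noteq> v'" by simp
  show ?thesis
  proof (cases "(I - {c}) \<inter> T = {}")
    case True
    then have "?R = {}" using arrangements_headed_UN[of T r "I - {c}"] by simp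
    have "hamiltonian_connected arr_adj (arrangements (T - {c}) r)"
      using T \<open>c \<in> T\<close> by (intro hamiltonian_connected_arrangements) auto
    with u'(2) v'(2) \<open>u' \<noteq> v'\<close> obtain P where "ham_path arr_adj (arrangements (T - {c}) r) u' v' P"
      unfolding hamiltonian_connected_def by blast
    from ham_path_block[OF \<open>c \<in> T\<close> this] show ?thesis
      using split \<open>?R = {}\<close> u'(1) v'(1) by auto
  next
    case False
    then obtain j where "j \<in> I" "j \<in> T" "j \<noteq> c" by blast
    from ham_path_block_detour[OF T IH \<open>c \<in> T\<close> this u'(2) v'(2) \<open>u' \<noteq> v'\<close>] show ?thesis
      unfolding split u'(1) v'(1) .
  qed
qed

lemma hamiltonian_connected_arrangements_headed:
  assumes T: "finite T" "5 \<le> card T" "r + 3 \<le> card T"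
  shows "hamiltonian_connected arr_adj (arrangements_headed T (Suc r) I)"
proof (induction "card (I \<inter> T)" arbitrary: I rule: less_induct)
  case less
  have hc: "\<forall>c\<in>T. hamiltonian_connected arr_adj (arrangements (T - {c}) r)"
    using T by (auto intro: hamiltonian_connected_arrangements)
  show ?case unfolding hamiltonian_connected_def
  proof (intro ballI impI)
    fix u v assume u: "u \<in> arrangements_headed T (Suc r) I"
      and v: "v \<in> arrangements_headed T (Suc r) I" and "u \<noteq> v"
    show "\<exists>P. ham_path arr_adj (arrangements_headed T (Suc r) I) u v P"
    proof (cases "hd u = hd v")
      case True
      have "hd u \<in> I" "hd u \<in> T"
        using u hd_in_arrangements by (auto simp: arrangements_headed_def)
      then have "card ((I - {hd u}) \<inter> T) < card (I \<inter> T)"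
        using T(1) by (intro psubset_card_mono) auto
      then have "hamiltonian_connected arr_adj (arrangements_headed T (Suc r) (I - {hd u}))"
        by (rule less.hyps)
      from ham_path_same_head[OF T this \<open>hd u \<in> I\<close> refl True[symmetric] u v \<open>u \<noteq> v\<close>]
      show ?thesis .
    next
      case False
      with T u v hc show ?thesis by (metis ham_path_distinct_heads)
    qed
  qed
qed

theorem lemma4:
  fixes n k i :: nat and I :: "nat set"
  assumes "n \<ge> 5" and "k \<ge> 2" and "n - k \<ge> 2"
    and "1 \<le> i" and "i \<le> k"
    and "I \<subseteq> {1..n}" and "I \<noteq> {}"
  shows "hamiltonian_connected arr_adj (arr_sub_vertices n k i I)"
proof -
  define \<tau> where "\<tau> = Transposition.transpose 0 (i - 1)"
  have "i - 1 < k" using assms(4,5) by simp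
  then have \<tau>: "\<tau> permutes {..<k}" by (simp add: \<tau>_def permutes_transpose_0)
  obtain r where k: "k = Suc r" using assms(2) by (cases k) auto
  have "hamiltonian_connected arr_adj (arrangements_headed {1..n} k I)"
    unfolding k using assms(1-3) k by (intro hamiltonian_connected_arrangements_headed) auto
  then have "hamiltonian_connected arr_adj (permute_list \<tau> ` arrangements_headed {1..n} k I)"
    by (rule hamiltonian_connected_permute_list[OF \<tau>, rotated])
      (auto simp: arrangements_headed_def arrangements_def)
  moreover have "permute_list \<tau> ` arrangements_headed {1..n} k I = arr_sub_vertices n k i I"
    unfolding \<tau>_def permute_list_transpose_arrangements_headed[OF \<open>i - 1 < k\<close>]
    by (simp add: arr_sub_vertices_def arr_vertices_def arrangements_def)
  ultimately show ?thesis by simp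
qed

end
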